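(* Let $\Theta\subseteq\mathbb{R}^p$ be convex, let $f:\mathbb{R}^p\to\mathbb{R}$, let $\kappa\in\Theta$, and let $g\in\mathcal{S}_L(f,\kappa)$. Define $h\triangleq g-f$ and let $\theta'\in\operatorname{arg\,min}_{\theta\in\Theta} g(\theta)$. Then for all $\theta\in\Theta$: (i) $|h(\theta)|\le \frac{L}{2}\|\theta-\kappa\|_2^2$; (ii) $f(\theta')\le f(\theta)+\frac{L}{2}\|\theta-\kappa\|_2^2$. If moreover $g\in\mathcal{S}_{L,\rho}(f,\kappa)$, then for all $\theta\in\Theta$: (iii) $f(\theta')+\frac{\rho}{2}\|\theta'-\theta\|_2^2\le f(\theta)+\frac{L}{2}\|\theta-\kappa\|_2^2$.
   Context: First-order surrogates: given a convex set $\Theta\subseteq\mathbb{R}^p$, a function $f:\mathbb{R}^p\to\mathbb{R}$, a point $\kappa$ and $L>0$, a function $g:\mathbb{R}^p\to\mathbb{R}$ belongs to $\mathcal{S}_L(f,\kappa)$ (is a first-order surrogate of $f$ near $\kappa$ in $\Theta$) if (a) (majorization) $g(\theta')\ge f(\theta')$ for all $\theta'\in\operatorname{arg\,min}_{\theta\in\Theta}g(\theta)$, and (b) (smoothness) the approximation error $h\triangleq g-f$ is differentiable on $\mathbb{R}^p$ with $L$-Lipschitz continuous gradient, and $h(\kappa)=0$, $\nabla h(\kappa)=0$. $\mathcal{S}_{L,\rho}(f,\kappa)$ denotes the subset of $\mathcal{S}_L(f,\kappa)$ consisting of $\rho$-strongly convex functions ($\rho>0$). *)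

theory Defs
  imports "HOL-Analysis.Analysis"
begin

definition argmin_on :: "'a set \<Rightarrow> ('a \<Rightarrow> real) \<Rightarrow> 'a set" where
  "argmin_on Theta g = {t \<in> Theta. \<forall>x \<in> Theta. g t \<le> g x}"

definition has_lipschitz_gradient :: "('a::euclidean_space \<Rightarrow> real) \<Rightarrow> ('a \<Rightarrow> 'a) \<Rightarrow> real \<Rightarrow> bool" where
  "has_lipschitz_gradient h D L \<longleftrightarrow>
     (\<forall>x. (h has_derivative (\<lambda>v. D x \<bullet> v)) (at x)) \<and>
     (\<forall>x y. norm (D x - D y) \<le> L * norm (x - y))"

definition first_order_surrogate ::
  "'a::euclidean_space set \<Rightarrow> real \<Rightarrow> ('a \<Rightarrow> real) \<Rightarrow> 'a \<Rightarrow> ('a \<Rightarrow> real) \<Rightarrow> bool" where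
  "first_order_surrogate Theta L f kappa g \<longleftrightarrow>
     (\<forall>t \<in> argmin_on Theta g. g t \<ge> f t) \<and>
     (\<exists>D. has_lipschitz_gradient (\<lambda>x. g x - f x) D L \<and>
          g kappa - f kappa = 0 \<and> D kappa = 0)"

definition strongly_convex :: "real \<Rightarrow> ('a::real_normed_vector \<Rightarrow> real) \<Rightarrow> bool" where
  "strongly_convex rho g \<longleftrightarrow>
     (\<forall>x y u. 0 \<le> u \<and> u \<le> 1 \<longrightarrow>
        g (u *\<^sub>R x + (1 - u) *\<^sub>R y) \<le> u * g x + (1 - u) * g y - rho / 2 * u * (1 - u) * (norm (x - y))\<^sup>2)"

definition strongly_convex_surrogate ::
  "'a::euclidean_space set \<Rightarrow> real \<Rightarrow> real \<Rightarrow> ('a \<Rightarrow> real) \<Rightarrow> 'a \<Rightarrow> ('a \<Rightarrow> real) \<Rightarrow> bool" where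
  "strongly_convex_surrogate Theta L rho f kappa g \<longleftrightarrow>
     first_order_surrogate Theta L f kappa g \<and> strongly_convex rho g"

end

theory Submission
  imports Defs
begin

text \<open>
  Along the segment from \<open>\<kappa>\<close> to \<open>\<theta>\<close> the derivative of \<open>h\<close> deviates from its value at \<open>\<kappa>\<close>
  by at most \<open>L s \<parallel>\<theta> - \<kappa>\<parallel>\<^sup>2\<close> at time \<open>s\<close>, so integrating gives the quadratic bound (i); together
  with majorization at the minimizer and minimality this gives (ii). For (iii), comparing
  \<open>g\<close> at the minimizer with \<open>g\<close> at points of the segment towards \<open>\<theta>\<close> and letting the step
  tend to zero shows \<open>g \<theta>' + \<rho>/2 \<parallel>\<theta>' - \<theta>\<parallel>\<^sup>2 \<le> g \<theta>\<close>.
\<close>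

lemma has_real_derivative_along_line:
  fixes h :: "'a::euclidean_space \<Rightarrow> real"
  assumes "\<And>x. (h has_derivative (\<lambda>v. D x \<bullet> v)) (at x)"
  shows "((\<lambda>s. h (k + s *\<^sub>R d)) has_real_derivative (D (k + s *\<^sub>R d) \<bullet> d)) (at s)"
proof -
  have "((\<lambda>s. k + s *\<^sub>R d) has_derivative (\<lambda>s'. s' *\<^sub>R d)) (at s)"
    by (auto intro!: derivative_eq_intros)
  from has_derivative_compose[OF this assms]
  have "((\<lambda>s. h (k + s *\<^sub>R d)) has_derivative (\<lambda>s'. D (k + s *\<^sub>R d) \<bullet> (s' *\<^sub>R d))) (at s)"
    by (simp add: o_def)
  then show ?thesis
    by (simp add: has_field_derivative_def mult_commute_abs)
qed

lemma abs_diff_le_half_of_abs_deriv_le_linear: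
  fixes \<phi> \<phi>' :: "real \<Rightarrow> real"
  assumes "\<And>s. 0 \<le> s \<Longrightarrow> s \<le> 1 \<Longrightarrow> (\<phi> has_real_derivative \<phi>' s) (at s)"
    and "\<And>s. 0 \<le> s \<Longrightarrow> s \<le> 1 \<Longrightarrow> \<bar>\<phi>' s\<bar> \<le> c * s"
  shows "\<bar>\<phi> 1 - \<phi> 0\<bar> \<le> c / 2"
proof -
  have dq: "((\<lambda>s. c / 2 * s\<^sup>2) has_real_derivative c * s) (at s)" for s
    by (auto intro!: derivative_eq_intros)
  have "\<phi> 1 - c / 2 * 1\<^sup>2 \<le> \<phi> 0 - c / 2 * 0\<^sup>2"
  proof (rule DERIV_nonpos_imp_nonincreasing[where f = "\<lambda>s. \<phi> s - c / 2 * s\<^sup>2"])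
    fix s :: real assume s: "0 \<le> s" "s \<le> 1"
    have "((\<lambda>s. \<phi> s - c / 2 * s\<^sup>2) has_real_derivative \<phi>' s - c * s) (at s)"
      using DERIV_diff[OF assms(1)[OF s] dq] .
    moreover have "\<phi>' s - c * s \<le> 0"
      using assms(2)[OF s] by (simp add: abs_le_iff)
    ultimately show "\<exists>y. ((\<lambda>s. \<phi> s - c / 2 * s\<^sup>2) has_real_derivative y) (at s) \<and> y \<le> 0"
      by blast
  qed simp
  moreover have "\<phi> 0 + c / 2 * 0\<^sup>2 \<le> \<phi> 1 + c / 2 * 1\<^sup>2"
  proof (rule DERIV_nonneg_imp_nondecreasing[where f = "\<lambda>s. \<phi> s + c / 2 * s\<^sup>2"])
    fix s :: real assume s: "0 \<le> s" "s \<le> 1"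
    have "((\<lambda>s. \<phi> s + c / 2 * s\<^sup>2) has_real_derivative \<phi>' s + c * s) (at s)"
      using DERIV_add[OF assms(1)[OF s] dq] .
    moreover have "\<phi>' s + c * s \<ge> 0"
      using assms(2)[OF s] by (simp add: abs_le_iff)
    ultimately show "\<exists>y. ((\<lambda>s. \<phi> s + c / 2 * s\<^sup>2) has_real_derivative y) (at s) \<and> y \<ge> 0"
      by blast
  qed simp
  ultimately show ?thesis
    unfolding abs_le_iff by simp
qed

lemma lipschitz_gradient_taylor_bound:
  fixes h :: "'a::euclidean_space \<Rightarrow> real"
  assumes "has_lipschitz_gradient h D L"
  shows "\<bar>h t - h k - D k \<bullet> (t - k)\<bar> \<le> L / 2 * (norm (t - k))\<^sup>2"
proof -
  define d where "d = t - k"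
  have deriv: "\<And>x. (h has_derivative (\<lambda>v. D x \<bullet> v)) (at x)"
    and lip: "\<And>x y. norm (D x - D y) \<le> L * norm (x - y)"
    using assms unfolding has_lipschitz_gradient_def by blast+
  have "((\<lambda>s. h (k + s *\<^sub>R d) - s * (D k \<bullet> d)) has_real_derivative
          (D (k + s *\<^sub>R d) - D k) \<bullet> d) (at s)" for s
    using has_real_derivative_along_line[OF deriv]
    by (auto intro!: derivative_eq_intros simp: inner_diff_left)
  moreover have "\<bar>(D (k + s *\<^sub>R d) - D k) \<bullet> d\<bar> \<le> L * (norm d)\<^sup>2 * s" if "0 \<le> s" for s
  proof -
    have "\<bar>(D (k + s *\<^sub>R d) - D k) \<bullet> d\<bar> \<le> norm (D (k + s *\<^sub>R d) - D k) * norm d"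
      by (rule Cauchy_Schwarz_ineq2)
    also have "\<dots> \<le> L * (s * norm d) * norm d"
      using lip[of "k + s *\<^sub>R d" k] that by (intro mult_right_mono) auto
    finally show ?thesis
      by (simp add: power2_eq_square algebra_simps)
  qed
  ultimately have "\<bar>(h (k + 1 *\<^sub>R d) - 1 * (D k \<bullet> d)) - (h (k + 0 *\<^sub>R d) - 0 * (D k \<bullet> d))\<bar>
      \<le> L * (norm d)\<^sup>2 / 2"
    by (intro abs_diff_le_half_of_abs_deriv_le_linear) auto
  then show ?thesis
    by (simp add: d_def algebra_simps)
qed

lemma strongly_convex_argmin_step:
  fixes g :: "'a::real_normed_vector \<Rightarrow> real"
  assumes "strongly_convex rho g" "convex Theta"
    and "t \<in> Theta" "t' \<in> argmin_on Theta g" "0 < u" "u \<le> 1"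
  shows "g t' \<le> g t - rho / 2 * (1 - u) * (norm (t - t'))\<^sup>2"
proof -
  have "t' \<in> Theta" and min: "\<And>x. x \<in> Theta \<Longrightarrow> g t' \<le> g x"
    using assms(4) by (auto simp: argmin_on_def)
  with assms have "u *\<^sub>R t + (1 - u) *\<^sub>R t' \<in> Theta"
    by (intro convexD) auto
  then have "g t' \<le> g (u *\<^sub>R t + (1 - u) *\<^sub>R t')"
    by (rule min)
  also have "\<dots> \<le> u * g t + (1 - u) * g t' - rho / 2 * u * (1 - u) * (norm (t - t'))\<^sup>2"
    using assms(1,5,6) unfolding strongly_convex_def by auto
  finally have "u * g t' \<le> u * (g t - rho / 2 * (1 - u) * (norm (t - t'))\<^sup>2)"
    by (simp add: algebra_simps)
  with \<open>0 < u\<close> show ?thesis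
    by simp
qed

lemma strongly_convex_argmin_growth:
  fixes g :: "'a::real_normed_vector \<Rightarrow> real"
  assumes "strongly_convex rho g" "convex Theta" "t \<in> Theta" "t' \<in> argmin_on Theta g"
  shows "g t' + rho / 2 * (norm (t' - t))\<^sup>2 \<le> g t"
proof -
  let ?n = "(norm (t - t'))\<^sup>2"
  have "((\<lambda>u. g t - rho / 2 * (1 - u) * ?n) \<longlongrightarrow> g t - rho / 2 * (1 - 0) * ?n) (at_right 0)"
    by (intro tendsto_intros)
  moreover have "\<forall>\<^sub>F u in at_right 0. g t' \<le> g t - rho / 2 * (1 - u) * ?n"
    unfolding eventually_at_right_field
    using strongly_convex_argmin_step[OF assms] by (intro exI[of _ 1]) auto
  ultimately have "g t' \<le> g t - rho / 2 * ?n"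
    by (auto intro: tendsto_lowerbound)
  then show ?thesis
    by (simp add: norm_minus_commute)
qed

theorem lemma2p1:
  fixes Theta :: "'a::euclidean_space set" and f g :: "'a \<Rightarrow> real"
    and kappa t' :: 'a and L :: real
  assumes "convex Theta" and "kappa \<in> Theta" and "L > 0"
    and "first_order_surrogate Theta L f kappa g"
    and "t' \<in> argmin_on Theta g"
  shows "(\<forall>t \<in> Theta. \<bar>g t - f t\<bar> \<le> L / 2 * (norm (t - kappa))\<^sup>2)
    \<and> (\<forall>t \<in> Theta. f t' \<le> f t + L / 2 * (norm (t - kappa))\<^sup>2)
    \<and> (\<forall>rho > 0. strongly_convex_surrogate Theta L rho f kappa g \<longrightarrow>
           (\<forall>t \<in> Theta. f t' + rho / 2 * (norm (t' - t))\<^sup>2 \<le> f t + L / 2 * (norm (t - kappa))\<^sup>2))"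
proof -
  obtain D where "has_lipschitz_gradient (\<lambda>x. g x - f x) D L"
    and "g kappa - f kappa = 0" "D kappa = 0" and major: "\<forall>t \<in> argmin_on Theta g. f t \<le> g t"
    using assms(4) unfolding first_order_surrogate_def by blast
  then have error: "\<bar>g t - f t\<bar> \<le> L / 2 * (norm (t - kappa))\<^sup>2" for t
    using lipschitz_gradient_taylor_bound[of "\<lambda>x. g x - f x" D L t kappa] by simp
  have "f t' \<le> g t'"
    using major assms(5) by blast
  moreover have "g t' \<le> g t" if "t \<in> Theta" for t
    using assms(5) that by (auto simp: argmin_on_def)
  moreover have "g t' + rho / 2 * (norm (t' - t))\<^sup>2 \<le> g t"
    if "strongly_convex_surrogate Theta L rho f kappa g" "t \<in> Theta" for rho t
    using that strongly_convex_argmin_growth[OF _ assms(1) _ assms(5)]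
    unfolding strongly_convex_surrogate_def by blast
  ultimately show ?thesis
    using error by (smt (verit))
qed

end
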